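(* For every positive integer $k$ and every cell $c$ of the Aztec diamond $\operatorname{AD}(3k-2)$, the set $\operatorname{AD}(3k-2)\setminus\{c\}$ can be partitioned into L-trominoes (i.e. $\operatorname{AD}(3k-2)$ with one defect has a cover).
   Context: A cell is a unit square $[i,i+1]\times[j,j+1]$ with $i,j\in\mathbb{Z}$. An L-tromino is a set of three cells equal to a $2\times 2$ block of cells with one cell removed. The Aztec diamond $\operatorname{AD}(n)$ is the union of the cells $[a,a+1]\times[b,b+1]$, $a,b\in\mathbb{Z}$, lying completely inside $\{(x,y): |x|+|y|\le n+1\}$. *)

theory Defs
  imports Main
begin

(* A cell [a,a+1] x [b,b+1] is represented by its lower-left corner (a,b). *)
type_synonym cell = "int \<times> int"

definition block2 :: "int \<Rightarrow> int \<Rightarrow> cell set" where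
  "block2 i j = {(i,j), (i+1,j), (i,j+1), (i+1,j+1)}"

definition is_L_tromino :: "cell set \<Rightarrow> bool" where
  "is_L_tromino T \<longleftrightarrow> (\<exists>i j c. c \<in> block2 i j \<and> T = block2 i j - {c})"

(* The cell with corner (a,b) lies completely inside {|x|+|y| <= n+1}
   iff all four of its corners do (the region is convex). *)
definition aztec_diamond :: "nat \<Rightarrow> cell set" where
  "aztec_diamond n = {(a,b). \<forall>x\<in>{a, a+1}. \<forall>y\<in>{b, b+1}.
                          \<bar>x\<bar> + \<bar>y\<bar> \<le> int n + 1}"

definition tromino_partitionable :: "cell set \<Rightarrow> bool" where
  "tromino_partitionable S \<longleftrightarrow>
     (\<exists>P. (\<forall>T\<in>P. is_L_tromino T) \<and>
          (\<forall>T1\<in>P. \<forall>T2\<in>P. T1 \<noteq> T2 \<longrightarrow> T1 \<inter> T2 = {}) \<and>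
          \<Union>P = S)"

end

theory Submission
  imports Defs
begin

text \<open>
  \<open>AD(n + 3)\<close> is the disjoint union of a copy of \<open>AD(n)\<close> shifted three columns to the right
  and a collar consisting of the six leftmost cells of each of the middle \<open>2n\<close> rows together
  with the top and bottom three rows. The collar is always tileable: its upper half is a
  staircase of \<open>2 \<times> 6\<close> parallelograms (four trominoes each) capped by two or three rows of the
  diamond's tip, depending on the parity of \<open>n\<close>.

  By the symmetries of the diamond a defect \<open>(a, b)\<close> may be assumed to satisfy
  \<open>0 \<le> b \<le> a\<close>; then for \<open>n \<ge> 3\<close> the cell \<open>(a - 3, b)\<close> lies in \<open>AD(n)\<close>, and induction
  tiles the shifted copy minus the defect. The induction starts at \<open>AD(1)\<close>, a \<open>2 \<times> 2\<close> block,
  and at \<open>AD(4)\<close>, where four defects escape the shift argument and are tiled explicitly.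
\<close>

lemma tromino_partitionable_empty: "tromino_partitionable {}"
  unfolding tromino_partitionable_def by auto

lemma tromino_partitionable_L_tromino: "is_L_tromino T \<Longrightarrow> tromino_partitionable T"
  unfolding tromino_partitionable_def by (rule exI[of _ "{T}"]) auto

lemma tromino_partitionable_Un:
  assumes "tromino_partitionable A" "tromino_partitionable B" "A \<inter> B = {}"
  shows "tromino_partitionable (A \<union> B)"
proof -
  obtain P where P: "\<forall>T\<in>P. is_L_tromino T" "\<forall>T1\<in>P. \<forall>T2\<in>P. T1 \<noteq> T2 \<longrightarrow> T1 \<inter> T2 = {}" "\<Union>P = A"
    using assms(1) unfolding tromino_partitionable_def by blast
  obtain Q where Q: "\<forall>T\<in>Q. is_L_tromino T" "\<forall>T1\<in>Q. \<forall>T2\<in>Q. T1 \<noteq> T2 \<longrightarrow> T1 \<inter> T2 = {}" "\<Union>Q = B"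
    using assms(2) unfolding tromino_partitionable_def by blast
  have "T1 \<inter> T2 = {}" if "T1 \<in> P" "T2 \<in> Q" for T1 T2
    using that P(3) Q(3) assms(3) by blast
  then have "\<forall>T1\<in>P \<union> Q. \<forall>T2\<in>P \<union> Q. T1 \<noteq> T2 \<longrightarrow> T1 \<inter> T2 = {}"
    using P(2) Q(2) by (metis Int_commute Un_iff)
  then show ?thesis
    unfolding tromino_partitionable_def using P(1,3) Q(1,3)
    by (intro exI[of _ "P \<union> Q"]) auto
qed

lemma tromino_partitionable_image:
  assumes "inj g" "\<And>T. is_L_tromino T \<Longrightarrow> is_L_tromino (g ` T)" "tromino_partitionable S"
  shows "tromino_partitionable (g ` S)"
proof -
  obtain P where P: "\<forall>T\<in>P. is_L_tromino T" "\<forall>T1\<in>P. \<forall>T2\<in>P. T1 \<noteq> T2 \<longrightarrow> T1 \<inter> T2 = {}" "\<Union>P = S"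
    using assms(3) unfolding tromino_partitionable_def by blast
  have "\<forall>T1\<in>P. \<forall>T2\<in>P. g ` T1 \<noteq> g ` T2 \<longrightarrow> g ` T1 \<inter> g ` T2 = {}"
    using P(2) by (metis assms(1) image_empty image_Int)
  then show ?thesis
    unfolding tromino_partitionable_def using P(1,3) assms(2)
    by (intro exI[of _ "image g ` P"]) auto
qed

lemma is_L_tromino_image:
  assumes "inj g" "\<And>i j. \<exists>i' j'. g ` block2 i j = block2 i' j'" "is_L_tromino T"
  shows "is_L_tromino (g ` T)"
proof -
  obtain i j c where c: "c \<in> block2 i j" "T = block2 i j - {c}"
    using assms(3) unfolding is_L_tromino_def by blast
  obtain i' j' where "g ` block2 i j = block2 i' j'"
    using assms(2) by blast
  with c assms(1) have "g c \<in> block2 i' j'" "g ` T = block2 i' j' - {g c}"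
    by (auto simp: image_set_diff)
  then show ?thesis
    unfolding is_L_tromino_def by blast
qed

text \<open>Explicit tilings are given as lists of triples \<open>(i, j, c)\<close>: the \<open>2 \<times> 2\<close> block with
  lower-left cell \<open>(i, j)\<close> without its corner \<open>c\<close>. Disjointness then becomes \<open>distinct\<close>,
  decided by the simplifier.\<close>

datatype corner = SW | SE | NW | NE

fun tromino_cells :: "int \<times> int \<times> corner \<Rightarrow> cell list" where
  "tromino_cells (i, j, SW) = [(i+1, j), (i, j+1), (i+1, j+1)]"
| "tromino_cells (i, j, SE) = [(i, j), (i, j+1), (i+1, j+1)]"
| "tromino_cells (i, j, NW) = [(i, j), (i+1, j), (i+1, j+1)]"
| "tromino_cells (i, j, NE) = [(i, j), (i+1, j), (i, j+1)]"

lemma is_L_tromino_block2_Diff: "d \<in> block2 i j \<Longrightarrow> is_L_tromino (block2 i j - {d})"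
  unfolding is_L_tromino_def by blast

lemma corners_mem_block2:
  "(i, j) \<in> block2 i j" "(i + 1, j) \<in> block2 i j" "(i, j + 1) \<in> block2 i j" "(i + 1, j + 1) \<in> block2 i j"
  by (simp_all add: block2_def)

lemma set_tromino_cells:
  "set (tromino_cells (i, j, SW)) = block2 i j - {(i, j)}"
  "set (tromino_cells (i, j, SE)) = block2 i j - {(i + 1, j)}"
  "set (tromino_cells (i, j, NW)) = block2 i j - {(i, j + 1)}"
  "set (tromino_cells (i, j, NE)) = block2 i j - {(i + 1, j + 1)}"
  by (auto simp: block2_def)

lemma is_L_tromino_tromino_cells: "is_L_tromino (set (tromino_cells t))"
proof -
  obtain i j c where "t = (i, j, c)"
    by (rule prod_cases3)
  then show ?thesis
    by (cases c) (metis set_tromino_cells is_L_tromino_block2_Diff corners_mem_block2)+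
qed

lemma tromino_partitionable_concat:
  assumes "\<forall>xs\<in>set xss. is_L_tromino (set xs)" "distinct (concat xss)"
  shows "tromino_partitionable (set (concat xss))"
  unfolding tromino_partitionable_def
proof (intro exI[of _ "set ` set xss"] conjI)
  show "\<forall>T\<in>set ` set xss. is_L_tromino T"
    using assms(1) by auto
  show "\<forall>T1\<in>set ` set xss. \<forall>T2\<in>set ` set xss. T1 \<noteq> T2 \<longrightarrow> T1 \<inter> T2 = {}"
    using assms(2) unfolding distinct_concat_iff by blast
qed simp

lemma tromino_partitionable_tiling:
  assumes "distinct (concat (map tromino_cells ts))"
    and "set (concat (map tromino_cells ts)) \<subseteq> S" "S \<subseteq> set (concat (map tromino_cells ts))"
  shows "tromino_partitionable S"
  using tromino_partitionable_concat[OF _ assms(1)] assms(2,3) is_L_tromino_tromino_cells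
  by (metis ex_map_conv subset_antisym)

definition shift :: "int \<Rightarrow> int \<Rightarrow> cell \<Rightarrow> cell" where
  "shift dx dy = (\<lambda>(a, b). (a + dx, b + dy))"

definition flip_x :: "cell \<Rightarrow> cell" where
  "flip_x = (\<lambda>(a, b). (- 1 - a, b))"

definition flip_y :: "cell \<Rightarrow> cell" where
  "flip_y = (\<lambda>(a, b). (a, - 1 - b))"

lemma shift_apply [simp]: "shift dx dy (a, b) = (a + dx, b + dy)"
  by (simp add: shift_def)

lemma flip_x_apply [simp]: "flip_x (a, b) = (- 1 - a, b)"
  by (simp add: flip_x_def)

lemma flip_y_apply [simp]: "flip_y (a, b) = (a, - 1 - b)"
  by (simp add: flip_y_def)

lemma flip_x_flip_x [simp]: "flip_x (flip_x x) = x"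
  by (cases x) simp

lemma flip_y_flip_y [simp]: "flip_y (flip_y x) = x"
  by (cases x) simp

lemma inj_shift: "inj (shift dx dy)"
  by (auto simp: inj_def shift_def)

lemma inj_flip_x: "inj flip_x"
  by (metis flip_x_flip_x injI)

lemma inj_flip_y: "inj flip_y"
  by (metis flip_y_flip_y injI)

lemma mem_shift_image_iff: "(a, b) \<in> shift dx dy ` S \<longleftrightarrow> (a - dx, b - dy) \<in> S"
proof
  assume "(a, b) \<in> shift dx dy ` S"
  then show "(a - dx, b - dy) \<in> S"
    by (auto simp: shift_def)
next
  assume "(a - dx, b - dy) \<in> S"
  then have "shift dx dy (a - dx, b - dy) \<in> shift dx dy ` S"
    by (rule imageI)
  then show "(a, b) \<in> shift dx dy ` S"
    by simp
qed

lemma shift_block2: "shift dx dy ` block2 i j = block2 (i + dx) (j + dy)"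
  by (simp add: block2_def algebra_simps)

lemma flip_x_block2: "flip_x ` block2 i j = block2 (- i - 2) j"
  by (simp add: block2_def insert_commute algebra_simps)

lemma flip_y_block2: "flip_y ` block2 i j = block2 i (- j - 2)"
  by (simp add: block2_def insert_commute algebra_simps)

lemma swap_block2: "prod.swap ` block2 i j = block2 j i"
  by (simp add: block2_def insert_commute)

lemma is_L_tromino_shift: "is_L_tromino T \<Longrightarrow> is_L_tromino (shift dx dy ` T)"
  by (metis inj_shift is_L_tromino_image shift_block2)

lemma is_L_tromino_flip_x: "is_L_tromino T \<Longrightarrow> is_L_tromino (flip_x ` T)"
  by (metis inj_flip_x is_L_tromino_image flip_x_block2)

lemma is_L_tromino_flip_y: "is_L_tromino T \<Longrightarrow> is_L_tromino (flip_y ` T)"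
  by (metis inj_flip_y is_L_tromino_image flip_y_block2)

lemma is_L_tromino_swap: "is_L_tromino T \<Longrightarrow> is_L_tromino (prod.swap ` T)"
  by (metis inj_swap is_L_tromino_image swap_block2)

text \<open>\<open>cell_abs a = \<bar>a + 1/2\<bar> - 1/2\<close>, where \<open>a + 1/2\<close> is the centre of \<open>[a, a + 1]\<close>.
  Membership in the Aztec diamond becomes \<open>cell_abs a + cell_abs b < n\<close>, visibly invariant under \<open>a \<mapsto> -1 - a\<close>.\<close>

definition cell_abs :: "int \<Rightarrow> int" where
  "cell_abs a = (if 0 \<le> a then a else - a - 1)"

lemma mem_aztec_diamond_iff: "(a, b) \<in> aztec_diamond n \<longleftrightarrow> cell_abs a + cell_abs b < int n"
  by (auto simp: aztec_diamond_def cell_abs_def abs_if split: if_splits)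

lemma cell_abs_mirror [simp]: "cell_abs (- 1 - a) = cell_abs a"
  by (simp add: cell_abs_def)

lemma mem_image_involution_iff: "(\<And>x. g (g x) = x) \<Longrightarrow> x \<in> g ` A \<longleftrightarrow> g x \<in> A"
  by (metis image_iff)

lemma image_involution_eq:
  assumes "\<And>x. g (g x) = x" "\<And>x. x \<in> A \<Longrightarrow> g x \<in> A"
  shows "g ` A = A"
  using assms by (metis image_eqI image_subsetI subsetI subset_antisym)

lemma flip_x_aztec_diamond: "flip_x ` aztec_diamond n = aztec_diamond n"
  by (rule image_involution_eq) (auto simp: mem_aztec_diamond_iff)

lemma flip_y_aztec_diamond: "flip_y ` aztec_diamond n = aztec_diamond n"
  by (rule image_involution_eq) (auto simp: mem_aztec_diamond_iff)

lemma swap_aztec_diamond: "prod.swap ` aztec_diamond n = aztec_diamond n"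
  by (rule image_involution_eq) (auto simp: mem_aztec_diamond_iff)

lemma tromino_partitionable_defect_image:
  assumes "inj g" "\<And>T. is_L_tromino T \<Longrightarrow> is_L_tromino (g ` T)" "g ` A = A"
    and "tromino_partitionable (A - {c})"
  shows "tromino_partitionable (A - {g c})"
  using tromino_partitionable_image[OF assms(1,2,4)] assms(1,3) by (simp add: image_set_diff)

lemma aztec_defect_reduce:
  assumes sector: "\<And>a b. (a, b) \<in> aztec_diamond n \<Longrightarrow> 0 \<le> b \<Longrightarrow> b \<le> a \<Longrightarrow>
      tromino_partitionable (aztec_diamond n - {(a, b)})"
    and "c \<in> aztec_diamond n"
  shows "tromino_partitionable (aztec_diamond n - {c})"
proof -
  have quadrant: "tromino_partitionable (aztec_diamond n - {(a, b)})"
    if "(a, b) \<in> aztec_diamond n" "0 \<le> a" "0 \<le> b" for a b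
  proof (cases "b \<le> a")
    case False
    then have "tromino_partitionable (aztec_diamond n - {(b, a)})"
      using sector that swap_aztec_diamond by (metis (no_types) imageI linorder_le_cases swap_simp)
    then show ?thesis
      using tromino_partitionable_defect_image[OF inj_swap is_L_tromino_swap swap_aztec_diamond] by fastforce
  qed (use sector that in blast)
  have half: "tromino_partitionable (aztec_diamond n - {(a, b)})"
    if "(a, b) \<in> aztec_diamond n" "0 \<le> b" for a b
  proof (cases "0 \<le> a")
    case False
    then have "tromino_partitionable (aztec_diamond n - {(- 1 - a, b)})"
      using quadrant that by (simp add: mem_aztec_diamond_iff)
    then show ?thesis
      using tromino_partitionable_defect_image[OF inj_flip_x is_L_tromino_flip_x flip_x_aztec_diamond]
      by fastforce
  qed (use quadrant that in blast)
  obtain a b where c: "c = (a, b)"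
    by fastforce
  show ?thesis
  proof (cases "0 \<le> b")
    case False
    then have "tromino_partitionable (aztec_diamond n - {(a, - 1 - b)})"
      using half assms(2) by (simp add: c mem_aztec_diamond_iff)
    then show ?thesis
      using tromino_partitionable_defect_image[OF inj_flip_y is_L_tromino_flip_y flip_y_aztec_diamond] c
      by fastforce
  qed (use half assms(2) c in blast)
qed

definition parallelogram :: "int \<Rightarrow> int \<Rightarrow> cell set" where
  "parallelogram x y = {(a, b). y \<le> b \<and> b \<le> y + 1 \<and> x + (b - y) \<le> a \<and> a \<le> x + (b - y) + 5}"

lemma tromino_partitionable_parallelogram: "tromino_partitionable (parallelogram x y)"
  by (rule tromino_partitionable_tiling[where
        ts = "[(x, y, NW), (x + 5, y, SE), (x + 3, y, SW), (x + 2, y, NE)]"])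
     (simp, (auto simp: parallelogram_def)[1], (clarsimp simp: parallelogram_def; presburger))

definition staircase :: "int \<Rightarrow> nat \<Rightarrow> cell set" where
  "staircase x m = {(a, b). 0 \<le> b \<and> b < 2 * int m \<and> x + b \<le> a \<and> a \<le> x + b + 5}"

lemma tromino_partitionable_staircase: "tromino_partitionable (staircase x m)"
proof (induction m)
  case 0
  have "staircase x 0 = {}"
    by (auto simp: staircase_def)
  then show ?case
    by (simp add: tromino_partitionable_empty)
next
  case (Suc m)
  have "staircase x (Suc m) = staircase x m \<union> parallelogram (x + 2 * int m) (2 * int m)"
    by (auto simp: staircase_def parallelogram_def)
  moreover have "staircase x m \<inter> parallelogram (x + 2 * int m) (2 * int m) = {}"
    by (auto simp: staircase_def parallelogram_def)
  ultimately show ?case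
    using tromino_partitionable_Un[OF Suc tromino_partitionable_parallelogram] by simp
qed

definition pyramid :: "int \<Rightarrow> int \<Rightarrow> cell set" where
  "pyramid h y = {(a, b). y \<le> b \<and> cell_abs a + b < y + h}"

lemma tromino_partitionable_pyramid_2: "tromino_partitionable (pyramid 2 y)"
  by (rule tromino_partitionable_tiling[where ts = "[(-2, y, NW), (0, y, NE)]"])
     (simp, (auto simp: pyramid_def cell_abs_def)[1],
      (clarsimp simp: pyramid_def cell_abs_def split: if_splits; presburger))

lemma tromino_partitionable_pyramid_3: "tromino_partitionable (pyramid 3 y)"
  by (rule tromino_partitionable_tiling[where ts = "[(1, y, NE), (-3, y, NW), (-1, y, NE), (-1, y + 1, SW)]"])
     (simp, (auto simp: pyramid_def cell_abs_def)[1],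
      (clarsimp simp: pyramid_def cell_abs_def split: if_splits; presburger))

definition aztec_collar :: "nat \<Rightarrow> cell set" where
  "aztec_collar n = aztec_diamond (n + 3) - shift 3 0 ` aztec_diamond n"

lemma mem_aztec_collar_iff:
  "(a, b) \<in> aztec_collar n \<longleftrightarrow>
     cell_abs a + cell_abs b < int n + 3 \<and> \<not> cell_abs (a - 3) + cell_abs b < int n"
  by (simp add: aztec_collar_def mem_shift_image_iff mem_aztec_diamond_iff)

lemma tromino_partitionable_upper_aztec_collar:
  "tromino_partitionable {x \<in> aztec_collar n. 0 \<le> snd x}"
proof (cases "even n")
  case True
  then obtain m where n: "n = 2 * m"
    by blast
  have "{x \<in> aztec_collar n. 0 \<le> snd x} = staircase (- int n - 3) m \<union> pyramid 3 (int n)"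
    by (rule set_eqI, clarsimp simp: mem_aztec_collar_iff staircase_def pyramid_def n cell_abs_def
        split: if_splits; presburger)
  moreover have "staircase (- int n - 3) m \<inter> pyramid 3 (int n) = {}"
    by (auto simp: staircase_def pyramid_def n)
  ultimately show ?thesis
    using tromino_partitionable_Un tromino_partitionable_staircase tromino_partitionable_pyramid_3
    by metis
next
  case False
  then obtain m where n: "n = 2 * m + 1"
    using oddE by blast
  have "{x \<in> aztec_collar n. 0 \<le> snd x} = staircase (- int n - 3) (m + 1) \<union> pyramid 2 (int n + 1)"
    by (rule set_eqI, clarsimp simp: mem_aztec_collar_iff staircase_def pyramid_def n cell_abs_def
        split: if_splits; presburger)
  moreover have "staircase (- int n - 3) (m + 1) \<inter> pyramid 2 (int n + 1) = {}"
    by (auto simp: staircase_def pyramid_def n)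
  ultimately show ?thesis
    using tromino_partitionable_Un tromino_partitionable_staircase tromino_partitionable_pyramid_2
    by metis
qed

lemma tromino_partitionable_aztec_collar: "tromino_partitionable (aztec_collar n)"
proof -
  let ?U = "{x \<in> aztec_collar n. 0 \<le> snd x}"
  have halves: "aztec_collar n = ?U \<union> flip_y ` ?U"
  proof (rule set_eqI)
    fix x :: cell
    obtain a b where x: "x = (a, b)"
      by fastforce
    have "x \<in> flip_y ` ?U \<longleftrightarrow> flip_y x \<in> ?U"
      using mem_image_involution_iff[of flip_y] by simp
    then show "x \<in> aztec_collar n \<longleftrightarrow> x \<in> ?U \<union> flip_y ` ?U"
      unfolding x by (simp add: mem_aztec_collar_iff) linarith
  qed
  have "?U \<inter> flip_y ` ?U = {}"
    by (auto simp: flip_y_def)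
  then have "tromino_partitionable (?U \<union> flip_y ` ?U)"
    using tromino_partitionable_Un tromino_partitionable_upper_aztec_collar
      tromino_partitionable_image[OF inj_flip_y is_L_tromino_flip_y] by blast
  then show ?thesis
    by (rule ssubst[OF halves])
qed

lemma aztec_defect_shift:
  assumes "tromino_partitionable (aztec_diamond n - {(a - 3, b)})" "(a - 3, b) \<in> aztec_diamond n"
  shows "tromino_partitionable (aztec_diamond (n + 3) - {(a, b)})"
proof -
  let ?S = "shift 3 0 ` aztec_diamond n"
  have "?S \<subseteq> aztec_diamond (n + 3)"
    by (auto simp: mem_aztec_diamond_iff cell_abs_def split: if_splits)
  moreover have "(a, b) \<in> ?S"
    using assms(2) by (simp add: mem_shift_image_iff)
  ultimately have parts: "aztec_diamond (n + 3) - {(a, b)} = (?S - {(a, b)}) \<union> aztec_collar n"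
    unfolding aztec_collar_def by blast
  have "(?S - {(a, b)}) \<inter> aztec_collar n = {}"
    unfolding aztec_collar_def by blast
  moreover have "tromino_partitionable (?S - {(a, b)})"
    using tromino_partitionable_image[OF inj_shift[of 3 0] is_L_tromino_shift assms(1)]
    by (simp add: image_set_diff[OF inj_shift])
  ultimately have "tromino_partitionable ((?S - {(a, b)}) \<union> aztec_collar n)"
    using tromino_partitionable_Un tromino_partitionable_aztec_collar by blast
  then show ?thesis
    by (rule ssubst[OF parts])
qed

lemma tromino_partitionable_aztec_diamond_1:
  assumes "c \<in> aztec_diamond 1"
  shows "tromino_partitionable (aztec_diamond 1 - {c})"
proof -
  have "aztec_diamond 1 = block2 (- 1) (- 1)"
    by (rule set_eqI, clarsimp simp: mem_aztec_diamond_iff cell_abs_def block2_def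
        split: if_splits; presburger)
  then show ?thesis
    using assms tromino_partitionable_L_tromino is_L_tromino_block2_Diff by metis
qed

lemma tromino_partitionable_aztec_diamond_4_minus_0_0: "tromino_partitionable (aztec_diamond 4 - {(0, 0)})"
  by (rule tromino_partitionable_tiling[where ts =
      "[(2, -1, NW), (1, -2, NE), (0, -4, SE), (-2, -4, SW), (1, 0, NW), (-1, -2, SW), (-2, -2, NE),
       (-4, -2, SW), (-4, 0, NW), (0, 1, NW), (-1, 2, SW), (-2, 0, NW), (-2, 1, SE)]"])
     (simp, (auto simp: mem_aztec_diamond_iff cell_abs_def)[1],
      (clarsimp simp: mem_aztec_diamond_iff cell_abs_def split: if_splits; presburger))

lemma tromino_partitionable_aztec_diamond_4_minus_1_0: "tromino_partitionable (aztec_diamond 4 - {(1, 0)})"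
  by (rule tromino_partitionable_tiling[where ts =
      "[(1, 0, SW), (2, -1, NW), (1, -2, NE), (0, -4, SE), (-2, -4, SW), (0, 2, NE), (-2, 2, NW),
       (-1, 0, SW), (-1, -2, SW), (-2, -2, NE), (-4, -2, SW), (-4, 0, NW), (-2, 0, NE)]"])
     (simp, (auto simp: mem_aztec_diamond_iff cell_abs_def)[1],
      (clarsimp simp: mem_aztec_diamond_iff cell_abs_def split: if_splits; presburger))

lemma tromino_partitionable_aztec_diamond_4_minus_1_1: "tromino_partitionable (aztec_diamond 4 - {(1, 1)})"
  by (rule tromino_partitionable_tiling[where ts =
      "[(0, 2, NE), (-2, 2, NW), (2, 0, NE), (2, -2, SE), (-1, 0, SW), (0, -1, NW), (0, -3, SW),
       (-1, -4, NW), (-2, -3, NW), (-4, -1, SE), (-3, 0, SW), (-2, -1, NW), (-3, -2, NE)]"])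
     (simp, (auto simp: mem_aztec_diamond_iff cell_abs_def)[1],
      (clarsimp simp: mem_aztec_diamond_iff cell_abs_def split: if_splits; presburger))

lemma tromino_partitionable_aztec_diamond_4_minus_2_1: "tromino_partitionable (aztec_diamond 4 - {(2, 1)})"
  by (rule tromino_partitionable_tiling[where ts =
      "[(2, -1, NW), (1, -2, NE), (1, 0, NE), (0, -4, SE), (-2, -4, SW), (0, 2, NE), (-2, 2, NW),
       (-1, 0, SW), (-1, -2, NW), (-4, -1, SE), (-3, 0, SW), (-2, -1, NW), (-3, -2, NE)]"])
     (simp, (auto simp: mem_aztec_diamond_iff cell_abs_def)[1],
      (clarsimp simp: mem_aztec_diamond_iff cell_abs_def split: if_splits; presburger))

lemma tromino_partitionable_aztec_diamond_4:
  assumes "c \<in> aztec_diamond 4"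
  shows "tromino_partitionable (aztec_diamond 4 - {c})"
proof (rule aztec_defect_reduce[OF _ assms])
  fix a b
  assume ab: "(a, b) \<in> aztec_diamond 4" "0 \<le> b" "b \<le> a"
  show "tromino_partitionable (aztec_diamond 4 - {(a, b)})"
  proof (cases "(a - 3, b) \<in> aztec_diamond 1")
    case True
    then show ?thesis
      using aztec_defect_shift[of 1 a b] tromino_partitionable_aztec_diamond_1 by simp
  next
    case False
    with ab have "(a, b) \<in> {(0, 0), (1, 0), (1, 1), (2, 1)}"
      by (clarsimp simp: mem_aztec_diamond_iff cell_abs_def split: if_splits; presburger)
    then show ?thesis
      using tromino_partitionable_aztec_diamond_4_minus_0_0 tromino_partitionable_aztec_diamond_4_minus_1_0
        tromino_partitionable_aztec_diamond_4_minus_1_1 tromino_partitionable_aztec_diamond_4_minus_2_1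
      by auto
  qed
qed

lemma aztec_defect_step:
  assumes "3 \<le> n" "\<And>c. c \<in> aztec_diamond n \<Longrightarrow> tromino_partitionable (aztec_diamond n - {c})"
    and "c \<in> aztec_diamond (n + 3)"
  shows "tromino_partitionable (aztec_diamond (n + 3) - {c})"
proof (rule aztec_defect_reduce[OF _ assms(3)])
  fix a b
  assume "(a, b) \<in> aztec_diamond (n + 3)" "0 \<le> b" "b \<le> a"
  then have "(a - 3, b) \<in> aztec_diamond n"
    using assms(1) by (auto simp: mem_aztec_diamond_iff cell_abs_def split: if_splits)
  then show "tromino_partitionable (aztec_diamond (n + 3) - {(a, b)})"
    using aztec_defect_shift assms(2) by blast
qed

lemma tromino_partitionable_aztec_diamond_3_mult_plus_4:
  "c \<in> aztec_diamond (3 * j + 4) \<Longrightarrow> tromino_partitionable (aztec_diamond (3 * j + 4) - {c})"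
proof (induction j arbitrary: c)
  case 0
  then show ?case
    using tromino_partitionable_aztec_diamond_4 by simp
next
  case (Suc j)
  then show ?case
    using aztec_defect_step[of "3 * j + 4"] by simp
qed

theorem corollary4:
  fixes k :: nat and c :: cell
  assumes "k \<ge> 1"
    and "c \<in> aztec_diamond (3*k - 2)"
  shows "tromino_partitionable (aztec_diamond (3*k - 2) - {c})"
proof (cases "k = 1")
  case True
  then show ?thesis
    using assms(2) tromino_partitionable_aztec_diamond_1 by simp
next
  case False
  with assms(1) have "3 * k - 2 = 3 * (k - 2) + 4"
    by arith
  then show ?thesis
    using assms(2) tromino_partitionable_aztec_diamond_3_mult_plus_4[of c "k - 2"] by simp
qed

end
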